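(* Let $n\ge3$ and let $\mathcal{G}$ be the directed star graph on nodes $\{1,\dots,n\}$ with center $1$, whose edges are $(1,j)$ and $(j,1)$ for $j=2,\dots,n$ together with self-loops $(i,i)$ at every node. Let $\tau\in\mathbb{Z}$ with $2\le\tau\le 2n-3$. Then the matrix $P^*$ with $P^*(1,1)=0$, $P^*(1,j)=\frac1{n-1}$ for $j\ge2$, and $P^*(j,1)=1$, $P^*(j,l)=0$ for $j\ge2$, $l\ne1$, is an optimal solution of $\max_P\min_{i,j}\mathbb{P}(T_{ij}(P)\le\tau)$ over all Markov chain strategies $P$ conforming to $\mathcal{G}$, and the value of the game is $$\mathbb{V}=\begin{cases}1-\left(1-\frac1{n-1}\right)^{\frac{\tau-1}{2}}, & \tau \text{ odd},\\[2pt] 1-\left(1-\frac1{n-1}\right)^{\frac{\tau}{2}}, & \tau\text{ even}.\end{cases}$$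
   Context: A Markov chain strategy conforming to $\mathcal{G}=(V,\mathcal{E})$ is a row-stochastic nonnegative $P=(p_{ij})$ with $p_{ij}=0$ for $(i,j)\notin\mathcal{E}$. For the Markov chain $(X_k)$ with transition matrix $P$, $T_{ij}=\min\{k\ge1:X_k=j\}$ given $X_0=i$. The value of the game is $\mathbb{V}=\max_P\min_{i,j}\mathbb{P}(T_{ij}(P)\le\tau)$. *)

theory Defs
  imports Complex_Main
begin

text \<open>Nodes are 1..n; a transition matrix is a function nat => nat => real,
only its entries on {1..n} x {1..n} matter.\<close>

definition star_edges :: "nat \<Rightarrow> (nat \<times> nat) set" where
  "star_edges n = {(1, j) | j. 2 \<le> j \<and> j \<le> n} \<union> {(j, 1) | j. 2 \<le> j \<and> j \<le> n}
                  \<union> {(i, i) | i. 1 \<le> i \<and> i \<le> n}"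

definition conforms :: "nat \<Rightarrow> (nat \<times> nat) set \<Rightarrow> (nat \<Rightarrow> nat \<Rightarrow> real) \<Rightarrow> bool" where
  "conforms n E P \<longleftrightarrow>
     (\<forall>i\<in>{1..n}. \<forall>j\<in>{1..n}. P i j \<ge> 0) \<and>
     (\<forall>i\<in>{1..n}. (\<Sum>j\<in>{1..n}. P i j) = 1) \<and>
     (\<forall>i\<in>{1..n}. \<forall>j\<in>{1..n}. (i, j) \<notin> E \<longrightarrow> P i j = 0)"

text \<open>hit_prob n P k i j = Prob(T_ij <= k | X_0 = i), where T_ij = min{k >= 1. X_k = j},
  via the first-step decomposition of the first-passage event.\<close>
fun hit_prob :: "nat \<Rightarrow> (nat \<Rightarrow> nat \<Rightarrow> real) \<Rightarrow> nat \<Rightarrow> nat \<Rightarrow> nat \<Rightarrow> real" where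
  "hit_prob n P 0 i j = 0"
| "hit_prob n P (Suc k) i j =
     (\<Sum>l\<in>{1..n}. P i l * (if l = j then 1 else hit_prob n P k l j))"

definition min_hit :: "nat \<Rightarrow> (nat \<Rightarrow> nat \<Rightarrow> real) \<Rightarrow> nat \<Rightarrow> real" where
  "min_hit n P \<tau> = Min {hit_prob n P \<tau> i j | i j. i \<in> {1..n} \<and> j \<in> {1..n}}"

definition game_value :: "nat \<Rightarrow> (nat \<times> nat) set \<Rightarrow> nat \<Rightarrow> real" where
  "game_value n E \<tau> = (SUP P\<in>{P. conforms n E P}. min_hit n P \<tau>)"

definition P_star :: "nat \<Rightarrow> nat \<Rightarrow> nat \<Rightarrow> real" where
  "P_star n i j = (if i = 1 then (if j = 1 then 0 else 1 / (real n - 1))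
                   else (if j = 1 then 1 else 0))"

end

theory Submission
  imports Defs
begin

(* Every walk between two leaves passes through the hub 1, and each visit to a wrong leaf costs
   a step back to the hub. Let j be a leaf the hub moves to least often, so that
   P 1 j \<le> (1 - P 1 1) / (n - 1), and let g t be the probability of hitting j from the hub
   within t steps. A first-step analysis gives
     1 - g (t + 2) \<ge> P 1 1 * (1 - g (t + 1)) + (1 - P 1 1 - P 1 j) * (1 - g t),
   hence g t \<le> 1 - r ^ ((t + 1) div 2) with r = 1 - 1 / (n - 1); from any other leaf the first
   step only reaches the hub, which leaves 1 - r ^ (\<tau> div 2). The strategy P_star, alternating
   between the hub and a uniformly random leaf, attains these bounds with equality. The argument
   works for every \<tau> \<ge> 2. *)

lemma hit_prob_nonneg:
  assumes "conforms n E P" "i \<in> {1..n}"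
  shows "0 \<le> hit_prob n P t i j"
  using assms(2)
proof (induction t arbitrary: i)
  case (Suc t)
  then show ?case using assms(1) unfolding conforms_def by (auto intro!: sum_nonneg)
qed simp

lemma hit_prob_mono:
  assumes "conforms n E P" "i \<in> {1..n}"
  shows "hit_prob n P t i j \<le> hit_prob n P (Suc t) i j"
  using assms(2)
proof (induction t arbitrary: i)
  case 0
  then show ?case using hit_prob_nonneg[OF assms(1) 0, of "Suc 0"] by simp
next
  case (Suc t)
  have "0 \<le> P i l" if "l \<in> {1..n}" for l
    using assms(1) Suc.prems that unfolding conforms_def by auto
  then show ?case
    unfolding hit_prob.simps(2)[of n P "Suc t"] using Suc.IH
    by (subst hit_prob.simps(2)) (auto intro!: sum_mono mult_left_mono)
qed

lemma sum_split_hub: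
  fixes f :: "nat \<Rightarrow> 'a::comm_monoid_add"
  assumes "j \<in> {2..n}"
  shows "(\<Sum>x\<in>{1..n}. f x) = f 1 + f j + (\<Sum>x\<in>{2..n} - {j}. f x)"
proof -
  have "(\<Sum>x\<in>{1..n}. f x) = f 1 + (\<Sum>x\<in>{2..n}. f x)"
    using assms by (simp add: sum.atLeast_Suc_atMost numeral_2_eq_2)
  also have "(\<Sum>x\<in>{2..n}. f x) = f j + (\<Sum>x\<in>{2..n} - {j}. f x)"
    using assms by (simp add: sum.remove)
  finally show ?thesis by (simp add: add.assoc)
qed

lemma hit_prob_Suc_hub:
  assumes "j \<in> {2..n}"
  shows "hit_prob n P (Suc t) 1 j =
    P 1 1 * hit_prob n P t 1 j + P 1 j + (\<Sum>x\<in>{2..n} - {j}. P 1 x * hit_prob n P t x j)"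
  using sum_split_hub[OF assms, of "\<lambda>x. P 1 x * (if x = j then 1 else hit_prob n P t x j)"] assms
  by simp

lemma min_hit_le_hit_prob:
  assumes "i \<in> {1..n}" "j \<in> {1..n}"
  shows "min_hit n P \<tau> \<le> hit_prob n P \<tau> i j"
  unfolding min_hit_def
  using assms finite_image_set2[of "\<lambda>i. i \<in> {1..n}" "\<lambda>j. j \<in> {1..n}" "hit_prob n P \<tau>"]
  by (intro Min_le) auto

lemma le_min_hit:
  assumes "n \<ge> 1" "\<And>i j. i \<in> {1..n} \<Longrightarrow> j \<in> {1..n} \<Longrightarrow> x \<le> hit_prob n P \<tau> i j"
  shows "x \<le> min_hit n P \<tau>"
  unfolding min_hit_def
  using assms finite_image_set2[of "\<lambda>i. i \<in> {1..n}" "\<lambda>j. j \<in> {1..n}" "hit_prob n P \<tau>"]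
  by (subst Min_ge_iff) auto

locale star_strategy =
  fixes n :: nat and P :: "nat \<Rightarrow> nat \<Rightarrow> real"
  assumes conforms: "conforms n (star_edges n) P"
begin

lemma nonneg: "i \<in> {1..n} \<Longrightarrow> j \<in> {1..n} \<Longrightarrow> 0 \<le> P i j"
  using conforms unfolding conforms_def by blast

lemma row_sum: "i \<in> {1..n} \<Longrightarrow> (\<Sum>j\<in>{1..n}. P i j) = 1"
  using conforms unfolding conforms_def by blast

lemma leaf_row_zero:
  assumes "l \<in> {2..n}" "x \<in> {1..n}" "x \<noteq> 1" "x \<noteq> l"
  shows "P l x = 0"
proof -
  have "(l, x) \<notin> star_edges n" using assms unfolding star_edges_def by auto
  then show ?thesis using assms conforms unfolding conforms_def by auto
qed

lemma sum_leaf_row: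
  assumes "l \<in> {2..n}"
  shows "(\<Sum>x\<in>{1..n}. P l x * f x) = P l 1 * f 1 + P l l * f l"
proof -
  have "(\<Sum>x\<in>{1..n}. P l x * f x) = (\<Sum>x\<in>{1, l}. P l x * f x)"
    using assms leaf_row_zero[OF assms] by (intro sum.mono_neutral_right) auto
  then show ?thesis using assms by simp
qed

lemma leaf_row: "l \<in> {2..n} \<Longrightarrow> P l 1 + P l l = 1"
  using sum_leaf_row[of l "\<lambda>_. 1"] row_sum[of l] by simp

lemma hit_prob_Suc_leaf:
  assumes "l \<in> {2..n}"
  shows "hit_prob n P (Suc t) l j =
    P l 1 * (if j = 1 then 1 else hit_prob n P t 1 j) + P l l * (if j = l then 1 else hit_prob n P t l j)"
  using sum_leaf_row[OF assms] assms by (auto simp del: hit_prob.simps(1))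

lemma hit_prob_leaf_le_hub:
  assumes "l \<in> {2..n}" "j \<in> {2..n}" "l \<noteq> j"
  shows "hit_prob n P (Suc t) l j \<le> hit_prob n P t 1 j"
proof (induction t)
  case 0
  then show ?case using hit_prob_Suc_leaf[OF assms(1), of 0 j] assms by simp
next
  case (Suc t)
  have "hit_prob n P (Suc (Suc t)) l j = P l 1 * hit_prob n P (Suc t) 1 j + P l l * hit_prob n P (Suc t) l j"
    using hit_prob_Suc_leaf[OF assms(1)] assms by simp
  also have "\<dots> \<le> P l 1 * hit_prob n P (Suc t) 1 j + P l l * hit_prob n P (Suc t) 1 j"
    using Suc hit_prob_mono[OF conforms, of 1 t j] nonneg[of l l] assms
    by (intro add_left_mono mult_left_mono) auto
  also have "\<dots> = hit_prob n P (Suc t) 1 j"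
    using leaf_row[OF assms(1)] by algebra
  finally show ?case .
qed

lemma hub_rest_sum:
  assumes "j \<in> {2..n}"
  shows "(\<Sum>x\<in>{2..n} - {j}. P 1 x) = 1 - P 1 1 - P 1 j"
  using sum_split_hub[OF assms, of "P 1"] row_sum[of 1] assms by simp

lemma hit_prob_hub_Suc_Suc_le:
  assumes j: "j \<in> {2..n}"
  shows "hit_prob n P (Suc (Suc t)) 1 j \<le>
    P 1 1 * hit_prob n P (Suc t) 1 j + P 1 j + (1 - P 1 1 - P 1 j) * hit_prob n P t 1 j"
proof -
  have "(\<Sum>x\<in>{2..n} - {j}. P 1 x * hit_prob n P (Suc t) x j) \<le> (1 - P 1 1 - P 1 j) * hit_prob n P t 1 j"
    unfolding hub_rest_sum[OF j, symmetric] sum_distrib_right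
    using hit_prob_leaf_le_hub[OF _ j] nonneg[of 1] j
    by (intro sum_mono mult_left_mono) auto
  then show ?thesis
    using hit_prob_Suc_hub[OF j, where t = "Suc t"] by simp
qed

lemma hit_prob_hub_le:
  assumes j: "j \<in> {2..n}" and rare: "P 1 j \<le> (1 - P 1 1) / (real n - 1)"
  shows "hit_prob n P t 1 j \<le> 1 - (1 - 1 / (real n - 1)) ^ (Suc t div 2)"
proof (induction t rule: induct_nat_012)
  case 0
  then show ?case by simp
next
  case 1
  have "hit_prob n P (Suc 0) 1 j = P 1 j"
    using hit_prob_Suc_hub[OF j, where t = 0] by simp
  also have "\<dots> \<le> 1 / (real n - 1)"
    using rare divide_right_mono[of "1 - P 1 1" 1 "real n - 1"] nonneg[of 1 1] j by auto
  finally show ?case by simp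
next
  case (ge2 t)
  define r where "r = 1 - 1 / (real n - 1)"
  define a where "a = P 1 1"
  define p where "p = P 1 j"
  define R0 where "R0 = r ^ (Suc t div 2)"
  define R1 where "R1 = r ^ (Suc (Suc t) div 2)"
  have r: "0 \<le> r" "r \<le> 1" using j unfolding r_def by (auto simp: field_simps)
  have a: "0 \<le> a" using nonneg[of 1 1] j unfolding a_def by auto
  have rest: "0 \<le> 1 - a - p"
    unfolding a_def p_def hub_rest_sum[OF j, symmetric] using nonneg[of 1] j by (intro sum_nonneg) auto
  have "(1 - a) * r \<le> 1 - a - p"
    using rare j unfolding r_def a_def p_def by (simp add: field_simps)
  then have "(1 - a) * r * R0 \<le> (1 - a - p) * R0"
    using r unfolding R0_def by (intro mult_right_mono) auto
  moreover have "a * (r * R0) \<le> a * R1"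
    using r a unfolding R0_def R1_def by (intro mult_left_mono) (simp_all add: power_decreasing flip: power_Suc)
  ultimately have bound: "1 - a * R1 - (1 - a - p) * R0 \<le> 1 - r * R0"
    by (simp add: algebra_simps)
  have "hit_prob n P (Suc (Suc t)) 1 j \<le> a * hit_prob n P (Suc t) 1 j + p + (1 - a - p) * hit_prob n P t 1 j"
    unfolding a_def p_def by (rule hit_prob_hub_Suc_Suc_le[OF j])
  also have "\<dots> \<le> a * (1 - R1) + p + (1 - a - p) * (1 - R0)"
    using ge2 a rest unfolding R0_def R1_def r_def
    by (intro add_mono mult_left_mono) auto
  also have "\<dots> = 1 - a * R1 - (1 - a - p) * R0"
    by (simp add: algebra_simps)
  also have "\<dots> \<le> 1 - r * R0" by (fact bound)
  finally show ?case unfolding R0_def r_def by simp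
qed

lemma exists_rare_leaf:
  assumes "n \<ge> 2"
  shows "\<exists>j\<in>{2..n}. P 1 j \<le> (1 - P 1 1) / (real n - 1)"
proof -
  obtain j where j: "j \<in> {2..n}" and least: "\<And>x. x \<in> {2..n} \<Longrightarrow> P 1 j \<le> P 1 x"
    using ex_is_arg_min_if_finite[of "{2..n}" "P 1"] assms by (auto simp: is_arg_min_linorder)
  have "real (card {2..n}) * P 1 j \<le> (\<Sum>x\<in>{2..n}. P 1 x)"
    using least by (rule sum_bounded_below)
  also have "\<dots> = 1 - P 1 1"
    using row_sum[of 1] assms by (simp add: sum.atLeast_Suc_atMost numeral_2_eq_2)
  finally have "(real n - 1) * P 1 j \<le> 1 - P 1 1"
    using assms by (simp add: of_nat_diff)
  then show ?thesis
    using j assms by (intro bexI[of _ j]) (simp_all add: pos_le_divide_eq mult.commute)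
qed

lemma min_hit_le:
  assumes "n \<ge> 3" "\<tau> \<ge> 1"
  shows "min_hit n P \<tau> \<le> 1 - (1 - 1 / (real n - 1)) ^ (\<tau> div 2)"
proof -
  obtain j where j: "j \<in> {2..n}" and rare: "P 1 j \<le> (1 - P 1 1) / (real n - 1)"
    using exists_rare_leaf assms by auto
  define l where "l = (if j = 2 then 3 else 2 :: nat)"
  have l: "l \<in> {2..n}" "l \<noteq> j" using assms unfolding l_def by auto
  obtain s where s: "\<tau> = Suc s" using assms by (cases \<tau>) auto
  have "min_hit n P (Suc s) \<le> hit_prob n P (Suc s) l j"
    using l j by (intro min_hit_le_hit_prob) auto
  also have "\<dots> \<le> hit_prob n P s 1 j"
    using hit_prob_leaf_le_hub l j by blast
  also have "\<dots> \<le> 1 - (1 - 1 / (real n - 1)) ^ (Suc s div 2)"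
    using hit_prob_hub_le j rare by blast
  finally show ?thesis using s by simp
qed

end

lemma conforms_P_star:
  assumes "n \<ge> 2"
  shows "conforms n (star_edges n) (P_star n)"
proof -
  have rows: "(\<Sum>j\<in>{1..n}. P_star n i j) = 1" if "i \<in> {1..n}" for i
  proof (cases "i = 1")
    case True
    then show ?thesis
      using assms by (simp add: sum.atLeast_Suc_atMost numeral_2_eq_2 P_star_def of_nat_diff)
  qed (use that in \<open>simp add: P_star_def\<close>)
  show ?thesis
    unfolding conforms_def using rows by (intro conjI) (auto simp: star_edges_def P_star_def)
qed

lemma star_strategy_P_star: "n \<ge> 2 \<Longrightarrow> star_strategy n (P_star n)"
  by unfold_locales (rule conforms_P_star)

lemma hit_prob_P_star_Suc_leaf:
  assumes "l \<in> {2..n}"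
  shows "hit_prob n (P_star n) (Suc t) l j = (if j = 1 then 1 else hit_prob n (P_star n) t 1 j)"
  using star_strategy.hit_prob_Suc_leaf[OF star_strategy_P_star, of n l t j] assms
  by (simp add: P_star_def)

lemma hit_prob_P_star_hub_hub:
  assumes "n \<ge> 2"
  shows "hit_prob n (P_star n) (Suc (Suc t)) 1 1 = 1"
proof -
  have "hit_prob n (P_star n) (Suc (Suc t)) 1 1 = (\<Sum>x\<in>{1..n}. P_star n 1 x)"
    using hit_prob_P_star_Suc_leaf by (auto intro!: sum.cong)
  also have "\<dots> = 1"
    using star_strategy.row_sum[OF star_strategy_P_star] assms by simp
  finally show ?thesis .
qed

lemma hit_prob_P_star_hub_leaf:
  assumes j: "j \<in> {2..n}"
  shows "hit_prob n (P_star n) t 1 j = 1 - (1 - 1 / (real n - 1)) ^ (Suc t div 2)"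
proof (induction t rule: induct_nat_012)
  case 0
  then show ?case by simp
next
  case 1
  have "hit_prob n (P_star n) (Suc 0) 1 j = P_star n 1 j"
    using hit_prob_Suc_hub[OF j, of "P_star n" 0] by simp
  also have "\<dots> = 1 / (real n - 1)"
    using j by (simp add: P_star_def)
  finally show ?case by simp
next
  case (ge2 t)
  define q where "q = 1 / (real n - 1)"
  have hub_row: "P_star n 1 1 = 0" "x \<noteq> 1 \<Longrightarrow> P_star n 1 x = q" for x
    unfolding P_star_def q_def by simp_all
  have "hit_prob n (P_star n) (Suc (Suc t)) 1 j = q + (\<Sum>x\<in>{2..n} - {j}. q * hit_prob n (P_star n) t 1 j)"
    using hit_prob_Suc_hub[OF j, of "P_star n" "Suc t"] hub_row j
    by (simp add: hit_prob_P_star_Suc_leaf del: hit_prob.simps(2))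
  also have "\<dots> = q + (1 - q) * hit_prob n (P_star n) t 1 j"
    using j unfolding q_def by (simp add: of_nat_diff field_simps)
  also have "\<dots> = q + (1 - q) * (1 - (1 - q) ^ (Suc t div 2))"
    using ge2(1) unfolding q_def by simp
  also have "\<dots> = 1 - (1 - q) ^ (Suc (Suc (Suc t)) div 2)"
    by (simp add: algebra_simps)
  finally show ?case unfolding q_def .
qed

lemma min_hit_P_star_ge:
  assumes "n \<ge> 3" "\<tau> \<ge> 2"
  shows "1 - (1 - 1 / (real n - 1)) ^ (\<tau> div 2) \<le> min_hit n (P_star n) \<tau>"
proof (rule le_min_hit)
  fix i j assume i: "i \<in> {1..n}" and j: "j \<in> {1..n}"
  define r where "r = 1 - 1 / (real n - 1)"
  have r: "0 \<le> r" "r \<le> 1" using assms unfolding r_def by (auto simp: field_simps)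
  obtain s where s: "\<tau> = Suc (Suc s)" using assms by (metis add_2_eq_Suc le_Suc_ex)
  consider "j = 1" | "j \<in> {2..n}" "i = 1" | "j \<in> {2..n}" "i \<in> {2..n}"
    using i j by fastforce
  then show "1 - r ^ (\<tau> div 2) \<le> hit_prob n (P_star n) \<tau> i j"
  proof cases
    case 1
    then have "hit_prob n (P_star n) \<tau> i j = 1"
      using i s assms hit_prob_P_star_hub_hub hit_prob_P_star_Suc_leaf by (cases "i = 1") auto
    then show ?thesis using r by simp
  next
    case 2
    then show ?thesis
      using hit_prob_P_star_hub_leaf r unfolding r_def by (simp add: power_decreasing)
  next
    case 3
    then show ?thesis
      using hit_prob_P_star_hub_leaf hit_prob_P_star_Suc_leaf s unfolding r_def
      by (simp del: hit_prob.simps(2))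
  qed
qed (use assms in simp)

theorem theorem2:
  fixes n \<tau> :: nat
  assumes "n \<ge> 3" and "2 \<le> \<tau>" and "\<tau> \<le> 2 * n - 3"
  shows "conforms n (star_edges n) (P_star n)
    \<and> (\<forall>P. conforms n (star_edges n) P \<longrightarrow> min_hit n P \<tau> \<le> min_hit n (P_star n) \<tau>)
    \<and> game_value n (star_edges n) \<tau> = min_hit n (P_star n) \<tau>
    \<and> game_value n (star_edges n) \<tau> =
        (if odd \<tau> then 1 - (1 - 1 / (real n - 1)) ^ ((\<tau> - 1) div 2)
         else 1 - (1 - 1 / (real n - 1)) ^ (\<tau> div 2))"
proof -
  define V where "V = 1 - (1 - 1 / (real n - 1)) ^ (\<tau> div 2)"
  have conf: "conforms n (star_edges n) (P_star n)"
    using conforms_P_star assms by simp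
  have upper: "min_hit n P \<tau> \<le> V" if "conforms n (star_edges n) P" for P
    using star_strategy.min_hit_le[OF star_strategy.intro[OF that]] assms unfolding V_def by simp
  have attained: "min_hit n (P_star n) \<tau> = V"
    using upper[OF conf] min_hit_P_star_ge assms unfolding V_def by (simp add: order_antisym)
  have game: "game_value n (star_edges n) \<tau> = min_hit n (P_star n) \<tau>"
    unfolding game_value_def using conf upper attained by (intro cSup_eq_maximum) auto
  have "odd \<tau> \<Longrightarrow> (\<tau> - 1) div 2 = \<tau> div 2" by (elim oddE) auto
  then show ?thesis
    using conf upper attained game unfolding V_def by auto
qed

end
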